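(* Let $P$ be a valid path with $m=m_T^P$ toll arcs $\tau_1,\dots,\tau_m$ and let $T$ be a nonnegative toll vector. Then $T$ is consistent with $P$ if and only if $$\mathcal{L}_{i,j}+\mathcal{T}_{i,j}\le \mathcal{U}_{i,j}\qquad\text{for all }0\le i<j\le m+1.$$
   Context: Setting: $G=(V,A)$ is a directed multigraph with $A=A_T\cup A_U$ partitioned into toll arcs $A_T$ and toll-free arcs $A_U$, fixed costs $c:A_T\to\mathbf{N}$, $d:A_U\to\mathbf{N}$, and vertices $s,t$ such that there is an $s$–$t$ path using only toll-free arcs. A toll vector $T$ assigns a toll $T(e)\ge 0$ to each toll arc; under $T$ a toll arc $e$ costs $c(e)+T(e)$ and a toll-free arc $e$ costs $d(e)$, and the length of a path is the sum of the costs of its arcs. For an $s$–$t$ path $P$, $\mathcal{N}_T(P)$ denotes the network obtained by deleting all toll arcs not on $P$, with the costs induced by $T$. A path $P$ from $s$ to $t$ is valid if it contains $m_T^P\ge 1$ toll arcs and $P$ is a shortest $s$–$t$ path in $\mathcal{N}_0(P)$ (all tolls zero). Write a valid path as $P=(\upsilon_{0,1},\tau_1,\upsilon_{1,2},\tau_2,\dots,\tau_m,\upsilon_{m,m+1})$, where $m=m_T^P$, $\tau_i$ is the $i$-th toll arc in order of traversal and $\upsilon_{i,i+1}$ is the subpath (of toll-free arcs) between consecutive toll arcs; set $\mathrm{TERM}(\tau_0)=s$ and $\mathrm{INIT}(\tau_{m+1})=t$, where $\mathrm{INIT},\mathrm{TERM}$ denote initial and terminal vertices of an arc. For $0\le i<j\le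 m+1$, $\mathcal{U}_{i,j}$ is the length of a shortest path from $\mathrm{TERM}(\tau_i)$ to $\mathrm{INIT}(\tau_j)$ using only toll-free arcs ($+\infty$ if none). For $0\le k<l\le m+1$, $\mathcal{L}_{k,l}=\sum_{i=k}^{l-1}\mathcal{U}_{i,i+1}+\sum_{i=k+1}^{l-1}c(\tau_i)$ and $\mathcal{T}_{k,l}=\sum_{i=k+1}^{l-1}T(\tau_i)$ (empty sums are $0$). A toll vector $T$ is consistent with a valid path $P$ if $P$ is a shortest $s$–$t$ path in $\mathcal{N}_T(P)$. *)

theory Defs
  imports Main "HOL-Library.Extended_Real"
begin

text \<open>A directed multigraph is given by an abstract arc type 'a with initial / terminal
vertex maps ini, ter :: 'a => 'v.  The arc set is AT \<union> AU (toll arcs / toll-free arcs).\<close>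

fun walk :: "('a \<Rightarrow> 'v) \<Rightarrow> ('a \<Rightarrow> 'v) \<Rightarrow> 'v \<Rightarrow> 'a list \<Rightarrow> 'v \<Rightarrow> bool" where
  "walk ini ter u [] v = (u = v)"
| "walk ini ter u (e # es) v = (ini e = u \<and> walk ini ter (ter e) es v)"

definition is_path :: "('a \<Rightarrow> 'v) \<Rightarrow> ('a \<Rightarrow> 'v) \<Rightarrow> 'a set \<Rightarrow> 'v \<Rightarrow> 'a list \<Rightarrow> 'v \<Rightarrow> bool" where
  "is_path ini ter Arcs u es v \<longleftrightarrow>
     set es \<subseteq> Arcs \<and> walk ini ter u es v \<and> distinct (u # map ter es)"

definition arc_cost :: "'a set \<Rightarrow> ('a \<Rightarrow> nat) \<Rightarrow> ('a \<Rightarrow> nat) \<Rightarrow> ('a \<Rightarrow> real) \<Rightarrow> 'a \<Rightarrow> real" where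
  "arc_cost AT c d T e = (if e \<in> AT then real (c e) + T e else real (d e))"

definition path_len :: "('a \<Rightarrow> real) \<Rightarrow> 'a list \<Rightarrow> real" where
  "path_len w es = sum_list (map w es)"

definition shortest_path :: "('a \<Rightarrow> 'v) \<Rightarrow> ('a \<Rightarrow> 'v) \<Rightarrow> 'a set \<Rightarrow> ('a \<Rightarrow> real) \<Rightarrow> 'v \<Rightarrow> 'a list \<Rightarrow> 'v \<Rightarrow> bool" where
  "shortest_path ini ter Arcs w u P v \<longleftrightarrow>
     is_path ini ter Arcs u P v \<and> (\<forall>Q. is_path ini ter Arcs u Q v \<longrightarrow> path_len w P \<le> path_len w Q)"

text \<open>Arc set of N_T(P): all toll-free arcs plus the toll arcs on P.\<close>
definition net_arcs :: "'a set \<Rightarrow> 'a set \<Rightarrow> 'a list \<Rightarrow> 'a set" where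
  "net_arcs AT AU P = AU \<union> (AT \<inter> set P)"

text \<open>Toll arcs of P in order of traversal: tau_i = tolls AT P ! (i - 1), 1 <= i <= m.\<close>
definition tolls :: "'a set \<Rightarrow> 'a list \<Rightarrow> 'a list" where
  "tolls AT P = filter (\<lambda>e. e \<in> AT) P"

definition valid_path :: "'a set \<Rightarrow> 'a set \<Rightarrow> ('a \<Rightarrow> 'v) \<Rightarrow> ('a \<Rightarrow> 'v) \<Rightarrow> ('a \<Rightarrow> nat) \<Rightarrow> ('a \<Rightarrow> nat)
    \<Rightarrow> 'v \<Rightarrow> 'v \<Rightarrow> 'a list \<Rightarrow> bool" where
  "valid_path AT AU ini ter c d s t P \<longleftrightarrow>
     is_path ini ter (AT \<union> AU) s P t \<and> length (tolls AT P) \<ge> 1 \<and>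
     shortest_path ini ter (net_arcs AT AU P) (arc_cost AT c d (\<lambda>_. 0)) s P t"

definition consistent :: "'a set \<Rightarrow> 'a set \<Rightarrow> ('a \<Rightarrow> 'v) \<Rightarrow> ('a \<Rightarrow> 'v) \<Rightarrow> ('a \<Rightarrow> nat) \<Rightarrow> ('a \<Rightarrow> nat)
    \<Rightarrow> 'v \<Rightarrow> 'v \<Rightarrow> ('a \<Rightarrow> real) \<Rightarrow> 'a list \<Rightarrow> bool" where
  "consistent AT AU ini ter c d s t T P \<longleftrightarrow>
     shortest_path ini ter (net_arcs AT AU P) (arc_cost AT c d T) s P t"

text \<open>TERM(tau_i) with TERM(tau_0) = s, and INIT(tau_j) with INIT(tau_(m+1)) = t.\<close>
definition term_tau :: "'a set \<Rightarrow> ('a \<Rightarrow> 'v) \<Rightarrow> 'v \<Rightarrow> 'a list \<Rightarrow> nat \<Rightarrow> 'v" where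
  "term_tau AT ter s P i = (if i = 0 then s else ter (tolls AT P ! (i - 1)))"

definition init_tau :: "'a set \<Rightarrow> ('a \<Rightarrow> 'v) \<Rightarrow> 'v \<Rightarrow> 'a list \<Rightarrow> nat \<Rightarrow> 'v" where
  "init_tau AT ini t P j = (if j = length (tolls AT P) + 1 then t else ini (tolls AT P ! (j - 1)))"

text \<open>Shortest toll-free path length from u to v (+infinity if none).\<close>
definition tf_dist :: "'a set \<Rightarrow> ('a \<Rightarrow> 'v) \<Rightarrow> ('a \<Rightarrow> 'v) \<Rightarrow> ('a \<Rightarrow> nat) \<Rightarrow> 'v \<Rightarrow> 'v \<Rightarrow> ereal" where
  "tf_dist AU ini ter d u v =
     Inf {ereal (path_len (\<lambda>e. real (d e)) Q) | Q. is_path ini ter AU u Q v}"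

definition U_ij :: "'a set \<Rightarrow> 'a set \<Rightarrow> ('a \<Rightarrow> 'v) \<Rightarrow> ('a \<Rightarrow> 'v) \<Rightarrow> ('a \<Rightarrow> nat)
    \<Rightarrow> 'v \<Rightarrow> 'v \<Rightarrow> 'a list \<Rightarrow> nat \<Rightarrow> nat \<Rightarrow> ereal" where
  "U_ij AT AU ini ter d s t P i j =
     tf_dist AU ini ter d (term_tau AT ter s P i) (init_tau AT ini t P j)"

definition L_ij :: "'a set \<Rightarrow> 'a set \<Rightarrow> ('a \<Rightarrow> 'v) \<Rightarrow> ('a \<Rightarrow> 'v) \<Rightarrow> ('a \<Rightarrow> nat) \<Rightarrow> ('a \<Rightarrow> nat)
    \<Rightarrow> 'v \<Rightarrow> 'v \<Rightarrow> 'a list \<Rightarrow> nat \<Rightarrow> nat \<Rightarrow> ereal" where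
  "L_ij AT AU ini ter c d s t P k l =
     (\<Sum>i\<in>{k..<l}. U_ij AT AU ini ter d s t P i (i + 1))
     + ereal (\<Sum>i\<in>{k<..<l}. real (c (tolls AT P ! (i - 1))))"

definition T_ij :: "'a set \<Rightarrow> ('a \<Rightarrow> real) \<Rightarrow> 'a list \<Rightarrow> nat \<Rightarrow> nat \<Rightarrow> real" where
  "T_ij AT T P k l = (\<Sum>i\<in>{k<..<l}. T (tolls AT P ! (i - 1)))"

end

theory Submission
  imports Defs
begin

text \<open>Let \<open>\<Phi> k\<close> be the cost under \<open>T\<close> of the first \<open>k\<close> arcs of \<open>P\<close>. Since \<open>P\<close> is shortest
  when all tolls are zero, every toll-free stretch of \<open>P\<close> between consecutive toll arcs is a
  shortest toll-free path, so \<open>U(l, l+1)\<close> is its \<open>\<Phi>\<close>-length, and telescoping gives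
  \<open>L(i, j) + T(i, j) = \<Phi>(INIT \<tau>\<^sub>j) - \<Phi>(TERM \<tau>\<^sub>i)\<close>. So the inequalities say that no toll-free
  path from \<open>TERM \<tau>\<^sub>i\<close> to \<open>INIT \<tau>\<^sub>j\<close> is shorter than the part of \<open>P\<close> between them.
  Necessity: such a shortcut could be spliced into \<open>P\<close>. Sufficiency: read as a potential on the
  vertices of \<open>P\<close>, \<open>\<Phi>\<close> grows by exactly the cost along each toll arc of \<open>P\<close> and by at most
  the length along each toll-free detour (along backward detours it does not grow at all, as costs
  are nonnegative); every \<open>s\<close>-\<open>t\<close> path of \<open>N\<^sub>T(P)\<close> splits into such pieces, so it is at
  least as long as \<open>\<Phi> t - \<Phi> s\<close>, the length of \<open>P\<close>.\<close>

section \<open>Walks, paths and their lengths\<close>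

lemma walk_append:
  "walk ini ter u (xs @ ys) v \<longleftrightarrow> (\<exists>w. walk ini ter u xs w \<and> walk ini ter w ys v)"
  by (induction xs arbitrary: u) auto

lemma walk_nth_ini:
  "walk ini ter u xs v \<Longrightarrow> k < length xs \<Longrightarrow> ini (xs ! k) = (u # map ter xs) ! k"
  by (induction xs arbitrary: u k) (auto simp: nth_Cons split: nat.split)

lemma walk_nth_last: "walk ini ter u xs v \<Longrightarrow> (u # map ter xs) ! length xs = v"
  by (induction xs arbitrary: u) auto

lemma walk_take:
  "walk ini ter u xs v \<Longrightarrow> k \<le> length xs \<Longrightarrow> walk ini ter u (take k xs) ((u # map ter xs) ! k)"
proof (induction xs arbitrary: u k)
  case (Cons e es)
  then show ?case by (cases k) auto
qed simp

lemma walk_drop: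
  "walk ini ter u xs v \<Longrightarrow> k \<le> length xs \<Longrightarrow> walk ini ter ((u # map ter xs) ! k) (drop k xs) v"
proof (induction xs arbitrary: u k)
  case (Cons e es)
  then show ?case by (cases k) auto
qed simp

lemma is_path_take:
  assumes "is_path ini ter A u xs v" "k \<le> length xs"
  shows "is_path ini ter A u (take k xs) ((u # map ter xs) ! k)"
proof -
  have "distinct (take (Suc k) (u # map ter xs))"
    using assms(1) unfolding is_path_def by (blast intro: distinct_take)
  then have "distinct (u # map ter (take k xs))"
    by (simp only: take_Suc_Cons take_map)
  then show ?thesis
    using assms walk_take[of ini ter u xs v k] set_take_subset[of k xs]
    unfolding is_path_def by auto
qed

lemma is_path_drop:
  assumes "is_path ini ter A u xs v" "k \<le> length xs"
  shows "is_path ini ter A ((u # map ter xs) ! k) (drop k xs) v"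
proof -
  have "(u # map ter xs) ! k # map ter (drop k xs) = drop k (u # map ter xs)"
    using Cons_nth_drop_Suc[of k "u # map ter xs"] assms(2) by (simp add: drop_map)
  moreover have "distinct (drop k (u # map ter xs))"
    using assms(1) unfolding is_path_def by (blast intro: distinct_drop)
  ultimately show ?thesis
    using assms walk_drop[of ini ter u xs v k] set_drop_subset[of k xs]
    unfolding is_path_def by auto
qed

lemma is_path_segment:
  assumes "is_path ini ter A u xs v" "a \<le> b" "b \<le> length xs"
  shows "is_path ini ter A ((u # map ter xs) ! a) (drop a (take b xs)) ((u # map ter xs) ! b)"
proof -
  have "is_path ini ter A u (take b xs) ((u # map ter xs) ! b)"
    using is_path_take assms by fastforce
  moreover have "(u # map ter (take b xs)) ! a = (u # map ter xs) ! a"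
    using assms by (simp add: nth_Cons' take_map)
  ultimately show ?thesis
    using is_path_drop[of ini ter A u "take b xs" _ a] assms by simp
qed

lemma path_len_Nil [simp]: "path_len w [] = 0"
  and path_len_Cons [simp]: "path_len w (e # es) = w e + path_len w es"
  and path_len_append [simp]: "path_len w (xs @ ys) = path_len w xs + path_len w ys"
  by (simp_all add: path_len_def)

lemma path_len_nonneg: "(\<And>e. e \<in> set xs \<Longrightarrow> 0 \<le> w e) \<Longrightarrow> 0 \<le> path_len w xs"
  unfolding path_len_def by (rule sum_list_nonneg) auto

lemma path_len_cong: "(\<And>e. e \<in> set xs \<Longrightarrow> f e = g e) \<Longrightarrow> path_len f xs = path_len g xs"
  unfolding path_len_def by (metis map_eq_conv)

lemma path_len_take_diff:
  "a \<le> b \<Longrightarrow> path_len w (take b xs) - path_len w (take a xs) = path_len w (drop a (take b xs))"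
  by (metis add_diff_cancel_left' append_take_drop_id min.absorb1 path_len_append take_take)

lemma path_len_take_mono:
  "(\<And>e. 0 \<le> w e) \<Longrightarrow> a \<le> b \<Longrightarrow> path_len w (take a xs) \<le> path_len w (take b xs)"
  using path_len_take_diff[of a b w xs] path_len_nonneg[of "drop a (take b xs)" w] by simp

lemma path_len_take_Suc:
  "k < length xs \<Longrightarrow> path_len w (take (Suc k) xs) = path_len w (take k xs) + w (xs ! k)"
  by (simp add: take_Suc_conv_app_nth)

lemma walk_to_path:
  assumes "walk ini ter u xs v" "\<And>e. e \<in> set xs \<Longrightarrow> 0 \<le> w e"
  obtains ys where "is_path ini ter (set xs) u ys v" "path_len w ys \<le> path_len w xs"
  using assms
proof (induction xs arbitrary: u thesis)
  case Nil
  then show ?case by (auto simp: is_path_def)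
next
  case (Cons e es)
  then have e: "ini e = u" "0 \<le> w e" and es: "walk ini ter (ter e) es v" by auto
  obtain ys where ys: "is_path ini ter (set es) (ter e) ys v" "path_len w ys \<le> path_len w es"
    using Cons.IH[OF _ es] Cons.prems(3) by auto
  show ?case
  proof (cases "u \<in> set (ter e # map ter ys)")
    case True
    \<comment> \<open>the walk revisits u: cut out the closed subwalk\<close>
    then obtain k where k: "k \<le> length ys" "(ter e # map ter ys) ! k = u"
      by (metis in_set_conv_nth length_Cons length_map less_Suc_eq_le)
    have "is_path ini ter (set es) u (drop k ys) v"
      using is_path_drop[OF ys(1) k(1)] k(2) by simp
    moreover have "0 \<le> path_len w (take k ys)"
      using ys(1) Cons.prems(3) by (intro path_len_nonneg) (auto simp: is_path_def dest: in_set_takeD)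
    then have "path_len w (drop k ys) \<le> path_len w ys"
      by (metis append_take_drop_id le_add_same_cancel2 path_len_append)
    ultimately show ?thesis
      using Cons.prems(1)[of "drop k ys"] ys(2) e(2) unfolding is_path_def by force
  next
    case False
    then have "is_path ini ter (set (e # es)) u (e # ys) v"
      using ys(1) e(1) unfolding is_path_def by auto
    then show ?thesis
      using Cons.prems(1) ys(2) by simp
  qed
qed

section \<open>Shortest paths and potentials\<close>

lemma shortest_path_segment_le:
  assumes shortest: "shortest_path ini ter N w s P t" and nonneg: "\<And>e. e \<in> N \<Longrightarrow> 0 \<le> w e"
    and "a \<le> b" "b \<le> length P"
    and R: "set R \<subseteq> N" "walk ini ter ((s # map ter P) ! a) R ((s # map ter P) ! b)"
  shows "path_len w (drop a (take b P)) \<le> path_len w R"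
proof -
  have P: "is_path ini ter N s P t"
    using shortest unfolding shortest_path_def by blast
  define X where "X = take a P @ R @ drop b P"
  have "walk ini ter s (take a P) ((s # map ter P) ! a)"
    and "walk ini ter ((s # map ter P) ! b) (drop b P) t"
    using is_path_take[OF P, of a] is_path_drop[OF P, of b] assms(3,4) unfolding is_path_def by auto
  then have "walk ini ter s X t"
    using R(2) unfolding X_def walk_append by blast
  moreover have X_N: "set X \<subseteq> N"
    using P R(1) set_take_subset[of a P] set_drop_subset[of b P] unfolding X_def is_path_def by auto
  ultimately obtain Y where Y: "is_path ini ter (set X) s Y t" "path_len w Y \<le> path_len w X"
    using walk_to_path[of ini ter s X t w] nonneg by blast
  have "is_path ini ter N s Y t"
    using Y(1) X_N unfolding is_path_def by auto
  then have "path_len w P \<le> path_len w Y"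
    using shortest unfolding shortest_path_def by blast
  moreover have "path_len w P = path_len w (take b P) + path_len w (drop b P)"
    by (metis append_take_drop_id path_len_append)
  ultimately show ?thesis
    using Y(2) path_len_take_diff[of a b w P] assms(3) unfolding X_def by simp
qed

lemma walk_potential_le:
  fixes \<pi> :: "'v \<Rightarrow> real"
  assumes special: "\<And>b. b \<in> B \<Longrightarrow> ini b \<in> Y \<and> ter b \<in> X \<and> \<pi> (ter b) - \<pi> (ini b) \<le> w b"
    and ordinary: "\<And>x y R. x \<in> X \<Longrightarrow> y \<in> Y \<Longrightarrow> set R \<subseteq> A \<Longrightarrow> walk ini ter x R y \<Longrightarrow>
        \<pi> y - \<pi> x \<le> path_len w R"
    and Q: "walk ini ter u Q v" "set Q \<subseteq> A \<union> B" and "u \<in> X" "v \<in> Y"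
  shows "\<pi> v - \<pi> u \<le> path_len w Q"
proof -
  have "\<pi> v - \<pi> x \<le> path_len w R + path_len w Q"
    if "walk ini ter u' Q v" "set Q \<subseteq> A \<union> B" "x \<in> X" "set R \<subseteq> A" "walk ini ter x R u'"
    for u' Q x R
    using that
  proof (induction Q arbitrary: u' x R)
    case Nil
    then show ?case using ordinary[OF _ \<open>v \<in> Y\<close>] by simp
  next
    case (Cons q Q)
    then have q: "ini q = u'" "walk ini ter (ter q) Q v" "set Q \<subseteq> A \<union> B" by auto
    show ?case
    proof (cases "q \<in> A")
      case True
      have "walk ini ter x (R @ [q]) (ter q)"
        using Cons.prems(5) q(1) by (auto simp: walk_append)
      then have "\<pi> v - \<pi> x \<le> path_len w (R @ [q]) + path_len w Q"
        using Cons.IH[OF q(2,3) Cons.prems(3), of "R @ [q]"] Cons.prems(4) True by simp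
      then show ?thesis by simp
    next
      case False
      then have "q \<in> B" using Cons.prems(2) by auto
      then have "ini q \<in> Y" "ter q \<in> X" "\<pi> (ter q) - \<pi> (ini q) \<le> w q"
        using special by auto
      moreover have "\<pi> v - \<pi> (ter q) \<le> path_len w Q"
        using Cons.IH[OF q(2,3) \<open>ter q \<in> X\<close>, of "[]"] by simp
      moreover have "\<pi> (ini q) - \<pi> x \<le> path_len w R"
        using ordinary[OF Cons.prems(3) \<open>ini q \<in> Y\<close> Cons.prems(4)] Cons.prems(5) q(1) by simp
      ultimately show ?thesis by simp
    qed
  qed
  from this[of u Q u "[]"] show ?thesis using assms by simp
qed

lemma sum_telescope_interleaved:
  fixes f g :: "nat \<Rightarrow> real"
  shows "i < j \<Longrightarrow> (\<Sum>l\<in>{i..<j}. f (Suc l) - g l) + (\<Sum>l\<in>{i<..<j}. g l - f l) = f j - g i"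
proof (induction j)
  case (Suc j)
  show ?case
  proof (cases "i = j")
    case False
    then have "{i..<Suc j} = insert j {i..<j}" "{i<..<Suc j} = insert j {i<..<j}"
      using Suc.prems by auto
    then show ?thesis using Suc False by simp
  next
    case True
    then have "{i<..<Suc j} = {}" by auto
    then show ?thesis using True by simp
  qed
qed simp

lemma tf_dist_le:
  "is_path ini ter AU u Q v \<Longrightarrow> tf_dist AU ini ter d u v \<le> ereal (path_len (\<lambda>e. real (d e)) Q)"
  unfolding tf_dist_def by (rule Inf_lower) blast

lemma le_tf_dist:
  "(\<And>Q. is_path ini ter AU u Q v \<Longrightarrow> x \<le> path_len (\<lambda>e. real (d e)) Q) \<Longrightarrow>
    ereal x \<le> tf_dist AU ini ter d u v"
  unfolding tf_dist_def by (rule Inf_greatest) auto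

section \<open>Positions of the toll arcs on a path\<close>

definition toll_pos :: "'a set \<Rightarrow> 'a list \<Rightarrow> nat list" where
  "toll_pos AT P = filter (\<lambda>k. P ! k \<in> AT) [0..<length P]"

lemma tolls_conv_toll_pos: "tolls AT P = map ((!) P) (toll_pos AT P)"
proof -
  have "tolls AT P = filter (\<lambda>e. e \<in> AT) (map ((!) P) [0..<length P])"
    by (simp add: tolls_def map_nth)
  then show ?thesis
    by (simp add: toll_pos_def filter_map comp_def)
qed

lemma length_toll_pos: "length (toll_pos AT P) = length (tolls AT P)"
  by (simp add: tolls_conv_toll_pos)

lemma toll_pos_less:
  "l < l' \<Longrightarrow> l' < length (tolls AT P) \<Longrightarrow> toll_pos AT P ! l < toll_pos AT P ! l'"
  using sorted_wrt_nth_less[of "(<)" "toll_pos AT P"] length_toll_pos[of AT P]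
  by (simp add: toll_pos_def sorted_wrt_filter)

lemma toll_pos_nth:
  assumes "l < length (tolls AT P)"
  shows "toll_pos AT P ! l < length P" "P ! (toll_pos AT P ! l) = tolls AT P ! l"
proof -
  have "toll_pos AT P ! l \<in> set (toll_pos AT P)"
    using assms length_toll_pos by (metis nth_mem)
  then show "toll_pos AT P ! l < length P"
    by (simp add: toll_pos_def)
  show "P ! (toll_pos AT P ! l) = tolls AT P ! l"
    using assms by (simp add: tolls_conv_toll_pos)
qed

lemma toll_in_toll_pos:
  assumes "k < length P" "P ! k \<in> AT"
  obtains l where "l < length (tolls AT P)" "k = toll_pos AT P ! l"
proof -
  have "k \<in> set (toll_pos AT P)"
    using assms by (simp add: toll_pos_def)
  then show ?thesis
    using that length_toll_pos by (metis in_set_conv_nth)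
qed

text \<open>Positions of \<open>INIT(\<tau>\<^sub>j)\<close> and \<open>TERM(\<tau>\<^sub>i)\<close> in the vertex sequence \<open>s # map ter P\<close>.
  The values \<open>init_pos AT P 0 = 0\<close> and \<open>term_pos AT P i = length P\<close> for \<open>i > m\<close> are padding
  that makes both functions monotone.\<close>

definition init_pos :: "'a set \<Rightarrow> 'a list \<Rightarrow> nat \<Rightarrow> nat" where
  "init_pos AT P j =
    (if j = 0 then 0 else if j \<le> length (tolls AT P) then toll_pos AT P ! (j - 1) else length P)"

definition term_pos :: "'a set \<Rightarrow> 'a list \<Rightarrow> nat \<Rightarrow> nat" where
  "term_pos AT P i =
    (if i = 0 then 0 else if i \<le> length (tolls AT P) then Suc (toll_pos AT P ! (i - 1)) else length P)"

lemma init_pos_le_term_pos: "init_pos AT P l \<le> term_pos AT P l"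
  by (simp add: init_pos_def term_pos_def)

lemma term_pos_le_init_pos_Suc: "term_pos AT P l \<le> init_pos AT P (Suc l)"
proof -
  consider "l = 0" | "0 < l" "l < length (tolls AT P)" | "l = length (tolls AT P)" | "l > length (tolls AT P)"
    by linarith
  then show ?thesis
  proof cases
    case 2
    then show ?thesis
      using toll_pos_less[of "l - 1" l AT P] by (simp add: init_pos_def term_pos_def)
  next
    case 3
    then show ?thesis
      using toll_pos_nth(1)[of "l - 1" AT P] by (simp add: init_pos_def term_pos_def Suc_le_eq)
  qed (simp_all add: init_pos_def term_pos_def)
qed

lemma mono_init_pos: "mono (init_pos AT P)"
  unfolding mono_iff_le_Suc using init_pos_le_term_pos term_pos_le_init_pos_Suc order_trans by blast

lemma mono_term_pos: "mono (term_pos AT P)"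
  unfolding mono_iff_le_Suc using init_pos_le_term_pos term_pos_le_init_pos_Suc order_trans by blast

lemma term_pos_le_init_pos_of_less: "i < j \<Longrightarrow> term_pos AT P i \<le> init_pos AT P j"
  using term_pos_le_init_pos_Suc[of AT P i] monoD[OF mono_init_pos[of AT P], of "Suc i" j] by simp

lemma init_pos_le_term_pos_of_le: "j \<le> i \<Longrightarrow> init_pos AT P j \<le> term_pos AT P i"
  using init_pos_le_term_pos[of AT P i] monoD[OF mono_init_pos[of AT P], of j i] by simp

lemma term_pos_le_length: "term_pos AT P i \<le> length P"
  using toll_pos_nth(1)[of "i - 1" AT P] by (simp add: term_pos_def Suc_le_eq)

lemma init_pos_le_length: "init_pos AT P j \<le> length P"
  using init_pos_le_term_pos term_pos_le_length order_trans by blast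

lemma init_pos_toll:
  assumes "1 \<le> l" "l \<le> length (tolls AT P)"
  shows "init_pos AT P l < length P" "term_pos AT P l = Suc (init_pos AT P l)"
    "P ! init_pos AT P l = tolls AT P ! (l - 1)"
  using assms toll_pos_nth[of "l - 1" AT P] by (simp_all add: init_pos_def term_pos_def)

lemma toll_at_init_pos:
  assumes "k < length P" "P ! k \<in> AT"
  obtains l where "1 \<le> l" "l \<le> length (tolls AT P)" "k = init_pos AT P l"
proof -
  obtain l where "l < length (tolls AT P)" "k = toll_pos AT P ! l"
    using toll_in_toll_pos assms by blast
  then show ?thesis
    using that[of "Suc l"] by (simp add: init_pos_def)
qed

lemma no_toll_between:
  assumes "term_pos AT P l \<le> k" "k < init_pos AT P (Suc l)"
  shows "P ! k \<notin> AT"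
proof
  assume "P ! k \<in> AT"
  moreover have "k < length P"
    using assms(2) init_pos_le_length order_less_le_trans by blast
  ultimately obtain l' where l': "1 \<le> l'" "l' \<le> length (tolls AT P)" "k = init_pos AT P l'"
    using toll_at_init_pos by blast
  show False
  proof (cases "l' \<le> l")
    case True
    then show False
      using monoD[OF mono_term_pos[of AT P] True] init_pos_toll(2)[OF l'(1,2)] l'(3) assms(1) by simp
  next
    case False
    then show False
      using monoD[OF mono_init_pos[of AT P], of "Suc l" l'] l'(3) assms(2) by simp
  qed
qed

section \<open>Consistency with a valid path\<close>

locale valid_toll_path =
  fixes AT AU :: "'a set" and ini ter :: "'a \<Rightarrow> 'v" and c d :: "'a \<Rightarrow> nat"
    and s t :: 'v and P :: "'a list"
  assumes disjoint: "AT \<inter> AU = {}"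
    and valid: "valid_path AT AU ini ter c d s t P"
begin

abbreviation "m \<equiv> length (tolls AT P)"
abbreviation "vs \<equiv> s # map ter P"
abbreviation "cost T \<equiv> arc_cost AT c d T"
abbreviation "prefix_cost T k \<equiv> path_len (cost T) (take k P)"

lemma path_P: "is_path ini ter (AT \<union> AU) s P t"
  using valid unfolding valid_path_def by blast

lemma walk_P: "walk ini ter s P t"
  using path_P unfolding is_path_def by blast

lemma shortest_P_toll_free: "shortest_path ini ter (net_arcs AT AU P) (cost (\<lambda>_. 0)) s P t"
  using valid unfolding valid_path_def by blast

lemma cost_nonneg: "\<forall>e\<in>AT. 0 \<le> T e \<Longrightarrow> 0 \<le> cost T e"
  by (auto simp: arc_cost_def)

lemma path_len_toll_free: "set Q \<subseteq> AU \<Longrightarrow> path_len (cost T) Q = path_len (\<lambda>e. real (d e)) Q"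
  using disjoint by (intro path_len_cong) (auto simp: arc_cost_def)

lemma term_tau_conv_nth: "i \<le> m \<Longrightarrow> term_tau AT ter s P i = vs ! term_pos AT P i"
  using toll_pos_nth[of "i - 1" AT P] by (simp add: term_tau_def term_pos_def)

lemma init_tau_conv_nth:
  assumes "1 \<le> j" "j \<le> m + 1"
  shows "init_tau AT ini t P j = vs ! init_pos AT P j"
proof (cases "j = m + 1")
  case True
  then show ?thesis
    using walk_nth_last[OF walk_P] by (simp add: init_tau_def init_pos_def)
next
  case False
  then have "j - 1 < m"
    using assms by simp
  then show ?thesis
    using assms False toll_pos_nth[OF \<open>j - 1 < m\<close>] walk_nth_ini[OF walk_P toll_pos_nth(1)[OF \<open>j - 1 < m\<close>]]
    by (simp add: init_tau_def init_pos_def)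
qed

lemma U_ij_conv:
  "i \<le> m \<Longrightarrow> 1 \<le> j \<Longrightarrow> j \<le> m + 1 \<Longrightarrow>
    U_ij AT AU ini ter d s t P i j = tf_dist AU ini ter d (vs ! term_pos AT P i) (vs ! init_pos AT P j)"
  by (simp add: U_ij_def term_tau_conv_nth init_tau_conv_nth)

lemma toll_free_stretch:
  "is_path ini ter AU (vs ! term_pos AT P l)
    (drop (term_pos AT P l) (take (init_pos AT P (Suc l)) P)) (vs ! init_pos AT P (Suc l))"
proof -
  let ?a = "term_pos AT P l" and ?b = "init_pos AT P (Suc l)"
  have ab: "?a \<le> ?b" "?b \<le> length P"
    using term_pos_le_init_pos_of_less init_pos_le_length by auto
  have stretch: "is_path ini ter (AT \<union> AU) (vs ! ?a) (drop ?a (take ?b P)) (vs ! ?b)"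
    using is_path_segment[OF path_P ab] .
  have "e \<in> AU" if e: "e \<in> set (drop ?a (take ?b P))" for e
  proof -
    obtain n where "n < length (drop ?a (take ?b P))" "e = drop ?a (take ?b P) ! n"
      using e unfolding in_set_conv_nth by blast
    then have "e = P ! (?a + n)" "?a + n < ?b"
      using ab by auto
    then show "e \<in> AU"
      using no_toll_between[of AT P l "?a + n"] stretch e unfolding is_path_def by auto
  qed
  then show ?thesis
    using stretch unfolding is_path_def by auto
qed

lemma U_consecutive:
  assumes "l \<le> m"
  shows "U_ij AT AU ini ter d s t P l (Suc l)
    = ereal (prefix_cost T (init_pos AT P (Suc l)) - prefix_cost T (term_pos AT P l))"
proof -
  let ?a = "term_pos AT P l" and ?b = "init_pos AT P (Suc l)"
  let ?stretch = "drop ?a (take ?b P)" and ?d = "\<lambda>e. real (d e)"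
  have ab: "?a \<le> ?b" "?b \<le> length P"
    using term_pos_le_init_pos_of_less init_pos_le_length by auto
  have stretch: "is_path ini ter AU (vs ! ?a) ?stretch (vs ! ?b)"
    by (rule toll_free_stretch)
  then have stretch_AU: "set ?stretch \<subseteq> AU"
    unfolding is_path_def by blast
  have "prefix_cost T ?b - prefix_cost T ?a = path_len ?d ?stretch"
    using path_len_take_diff[OF ab(1), of "cost T" P] path_len_toll_free[OF stretch_AU, of T] by simp
  moreover have "tf_dist AU ini ter d (vs ! ?a) (vs ! ?b) \<le> ereal (path_len ?d ?stretch)"
    using tf_dist_le[OF stretch] .
  moreover have "ereal (path_len ?d ?stretch) \<le> tf_dist AU ini ter d (vs ! ?a) (vs ! ?b)"
  proof (rule le_tf_dist)
    fix Q assume Q: "is_path ini ter AU (vs ! ?a) Q (vs ! ?b)"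
    then have Q_AU: "set Q \<subseteq> AU"
      unfolding is_path_def by blast
    have "path_len (cost (\<lambda>_. 0)) ?stretch \<le> path_len (cost (\<lambda>_. 0)) Q"
      using Q Q_AU ab
      by (intro shortest_path_segment_le[OF shortest_P_toll_free])
        (auto simp: net_arcs_def arc_cost_def is_path_def)
    then show "path_len ?d ?stretch \<le> path_len ?d Q"
      using path_len_toll_free Q_AU stretch_AU by metis
  qed
  ultimately show ?thesis
    using U_ij_conv assms by simp
qed

lemma toll_arc_cost:
  assumes "1 \<le> l" "l \<le> m"
  shows "prefix_cost T (term_pos AT P l) - prefix_cost T (init_pos AT P l)
    = real (c (tolls AT P ! (l - 1))) + T (tolls AT P ! (l - 1))"
proof -
  have "tolls AT P ! (l - 1) \<in> AT"
    using assms nth_mem[of "l - 1" "tolls AT P"] by (simp add: tolls_def)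
  then show ?thesis
    using init_pos_toll[OF assms] path_len_take_Suc[of "init_pos AT P l" P]
    by (simp add: arc_cost_def)
qed

lemma L_plus_T_eq:
  assumes "i < j" "j \<le> m + 1"
  shows "L_ij AT AU ini ter c d s t P i j + ereal (T_ij AT T P i j)
    = ereal (prefix_cost T (init_pos AT P j) - prefix_cost T (term_pos AT P i))"
proof -
  let ?f = "\<lambda>l. prefix_cost T (init_pos AT P l)" and ?g = "\<lambda>l. prefix_cost T (term_pos AT P l)"
  have "(\<Sum>l\<in>{i..<j}. U_ij AT AU ini ter d s t P l (l + 1)) = (\<Sum>l\<in>{i..<j}. ereal (?f (Suc l) - ?g l))"
    using U_consecutive assms by (intro sum.cong) auto
  moreover have "(\<Sum>l\<in>{i<..<j}. real (c (tolls AT P ! (l - 1)))) + T_ij AT T P i j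
      = (\<Sum>l\<in>{i<..<j}. ?g l - ?f l)"
    unfolding T_ij_def sum.distrib[symmetric] using toll_arc_cost assms by (intro sum.cong) auto
  ultimately show ?thesis
    using sum_telescope_interleaved[OF assms(1), of ?f ?g] unfolding L_ij_def by simp
qed

lemma bounds_if_consistent:
  assumes nonneg: "\<forall>e\<in>AT. 0 \<le> T e" and consistent: "consistent AT AU ini ter c d s t T P"
    and "i < j" "j \<le> m + 1"
  shows "L_ij AT AU ini ter c d s t P i j + ereal (T_ij AT T P i j) \<le> U_ij AT AU ini ter d s t P i j"
proof -
  let ?a = "term_pos AT P i" and ?b = "init_pos AT P j"
  have ab: "?a \<le> ?b" "?b \<le> length P"
    using term_pos_le_init_pos_of_less[OF \<open>i < j\<close>] init_pos_le_length by auto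
  have "ereal (prefix_cost T ?b - prefix_cost T ?a) \<le> tf_dist AU ini ter d (vs ! ?a) (vs ! ?b)"
  proof (rule le_tf_dist)
    fix Q assume Q: "is_path ini ter AU (vs ! ?a) Q (vs ! ?b)"
    then have Q_AU: "set Q \<subseteq> AU"
      unfolding is_path_def by blast
    have "path_len (cost T) (drop ?a (take ?b P)) \<le> path_len (cost T) Q"
      using consistent Q Q_AU ab cost_nonneg[OF nonneg]
      by (intro shortest_path_segment_le[of ini ter "net_arcs AT AU P"])
        (auto simp: consistent_def net_arcs_def is_path_def)
    then show "prefix_cost T ?b - prefix_cost T ?a \<le> path_len (\<lambda>e. real (d e)) Q"
      using path_len_take_diff[OF ab(1), of "cost T" P] path_len_toll_free[OF Q_AU] by simp
  qed
  then show ?thesis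
    using L_plus_T_eq U_ij_conv assms by simp
qed

lemma detour_bound_if_bounds:
  assumes nonneg: "\<forall>e\<in>AT. 0 \<le> T e"
    and bounds: "\<And>i j. i < j \<Longrightarrow> j \<le> m + 1 \<Longrightarrow>
      L_ij AT AU ini ter c d s t P i j + ereal (T_ij AT T P i j) \<le> U_ij AT AU ini ter d s t P i j"
    and ij: "i \<le> m" "1 \<le> j" "j \<le> m + 1"
    and R: "set R \<subseteq> AU" "walk ini ter (vs ! term_pos AT P i) R (vs ! init_pos AT P j)"
  shows "prefix_cost T (init_pos AT P j) - prefix_cost T (term_pos AT P i) \<le> path_len (cost T) R"
proof (cases "i < j")
  case True
  obtain R' where R': "is_path ini ter (set R) (vs ! term_pos AT P i) R' (vs ! init_pos AT P j)"
    "path_len (cost T) R' \<le> path_len (cost T) R"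
    using cost_nonneg[OF nonneg] by (rule walk_to_path[OF R(2)])
  then have R'_AU: "is_path ini ter AU (vs ! term_pos AT P i) R' (vs ! init_pos AT P j)"
    using R(1) unfolding is_path_def by auto
  have "ereal (prefix_cost T (init_pos AT P j) - prefix_cost T (term_pos AT P i))
      \<le> U_ij AT AU ini ter d s t P i j"
    using bounds[OF True ij(3)] unfolding L_plus_T_eq[OF True ij(3)] .
  also have "\<dots> \<le> ereal (path_len (\<lambda>e. real (d e)) R')"
    unfolding U_ij_conv[OF ij] by (rule tf_dist_le[OF R'_AU])
  also have "\<dots> = ereal (path_len (cost T) R')"
    using R'_AU path_len_toll_free[of R' T] unfolding is_path_def by simp
  finally show ?thesis
    using R'(2) by simp
next
  case False
  then have "init_pos AT P j \<le> term_pos AT P i"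
    by (intro init_pos_le_term_pos_of_le) simp
  then have "prefix_cost T (init_pos AT P j) \<le> prefix_cost T (term_pos AT P i)"
    by (rule path_len_take_mono[OF cost_nonneg[OF nonneg]])
  moreover have "0 \<le> path_len (cost T) R"
    using cost_nonneg[OF nonneg] by (rule path_len_nonneg)
  ultimately show ?thesis
    by simp
qed

abbreviation "term_vertices \<equiv> (\<lambda>i. vs ! term_pos AT P i) ` {..m}"
abbreviation "init_vertices \<equiv> (\<lambda>j. vs ! init_pos AT P j) ` {1..m + 1}"

definition potential :: "('a \<Rightarrow> real) \<Rightarrow> 'v \<Rightarrow> real" where
  "potential T v = prefix_cost T (the_inv_into {..length P} ((!) vs) v)"

lemma potential_nth: "k \<le> length P \<Longrightarrow> potential T (vs ! k) = prefix_cost T k"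
proof -
  assume "k \<le> length P"
  moreover have "inj_on ((!) vs) {..length P}"
    using path_P by (intro inj_on_nth) (auto simp: is_path_def)
  ultimately show ?thesis
    by (simp add: potential_def the_inv_into_f_f)
qed

lemma potential_toll_arc:
  assumes "b \<in> AT" "b \<in> set P"
  shows "ini b \<in> init_vertices" "ter b \<in> term_vertices"
    "potential T (ter b) - potential T (ini b) = cost T b"
proof -
  obtain k where k: "k < length P" "b = P ! k"
    using assms(2) by (auto simp: in_set_conv_nth)
  then obtain l where l: "1 \<le> l" "l \<le> m" "k = init_pos AT P l"
    using toll_at_init_pos assms(1) by blast
  have vertices: "ini b = vs ! init_pos AT P l" "ter b = vs ! term_pos AT P l"
    using k l init_pos_toll(2)[OF l(1,2)] walk_nth_ini[OF walk_P k(1)] by auto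
  then show "ini b \<in> init_vertices" "ter b \<in> term_vertices"
    using l by auto
  show "potential T (ter b) - potential T (ini b) = cost T b"
    using k l vertices init_pos_toll(2)[OF l(1,2)] potential_nth[of k] potential_nth[of "Suc k"]
      path_len_take_Suc[of k P]
    by simp
qed

lemma consistent_if_bounds:
  assumes nonneg: "\<forall>e\<in>AT. 0 \<le> T e"
    and bounds: "\<And>i j. i < j \<Longrightarrow> j \<le> m + 1 \<Longrightarrow>
      L_ij AT AU ini ter c d s t P i j + ereal (T_ij AT T P i j) \<le> U_ij AT AU ini ter d s t P i j"
  shows "consistent AT AU ini ter c d s t T P"
proof -
  have detour: "potential T y - potential T x \<le> path_len (cost T) R"
    if xy: "x \<in> term_vertices" "y \<in> init_vertices" and R: "set R \<subseteq> AU" "walk ini ter x R y"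
    for x y R
  proof -
    obtain i j where "i \<le> m" "x = vs ! term_pos AT P i" "1 \<le> j" "j \<le> m + 1" "y = vs ! init_pos AT P j"
      using xy by auto
    then show ?thesis
      using detour_bound_if_bounds[OF nonneg bounds, of i j R] R
        potential_nth[OF term_pos_le_length] potential_nth[OF init_pos_le_length] by simp
  qed
  have toll: "ini b \<in> init_vertices \<and> ter b \<in> term_vertices \<and>
      potential T (ter b) - potential T (ini b) \<le> cost T b" if "b \<in> AT \<inter> set P" for b
    using potential_toll_arc that by simp
  have s_term: "s \<in> term_vertices"
    using image_eqI[of s "\<lambda>i. vs ! term_pos AT P i" 0 "{..m}"] by (simp add: term_pos_def)
  have t_init: "t \<in> init_vertices"
    using image_eqI[of t "\<lambda>j. vs ! init_pos AT P j" "m + 1" "{1..m + 1}"] walk_nth_last[OF walk_P]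
    by (simp add: init_pos_def)
  show ?thesis
    unfolding consistent_def shortest_path_def
  proof (intro conjI allI impI)
    show "is_path ini ter (net_arcs AT AU P) s P t"
      using path_P by (auto simp: is_path_def net_arcs_def)
    fix Q assume "is_path ini ter (net_arcs AT AU P) s Q t"
    then have Q: "walk ini ter s Q t" "set Q \<subseteq> AU \<union> AT \<inter> set P"
      unfolding is_path_def net_arcs_def by auto
    have "potential T t - potential T s \<le> path_len (cost T) Q"
      using toll detour Q s_term t_init by (rule walk_potential_le)
    then show "path_len (cost T) P \<le> path_len (cost T) Q"
      using potential_nth[of 0] potential_nth[of "length P"] walk_nth_last[OF walk_P] by simp
  qed
qed

end

theorem theorem4:
  fixes AT AU :: "'a set" and ini ter :: "'a \<Rightarrow> 'v" and c d :: "'a \<Rightarrow> nat"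
    and s t :: 'v and T :: "'a \<Rightarrow> real" and P :: "'a list"
  assumes finite_arcs: "finite (AT \<union> AU)"
    and disjoint: "AT \<inter> AU = {}"
    and toll_free_st: "\<exists>Q. is_path ini ter AU s Q t"
    and valid: "valid_path AT AU ini ter c d s t P"
    and nonneg: "\<forall>e\<in>AT. T e \<ge> 0"
  shows "consistent AT AU ini ter c d s t T P \<longleftrightarrow>
    (\<forall>i j. i < j \<and> j \<le> length (tolls AT P) + 1 \<longrightarrow>
       L_ij AT AU ini ter c d s t P i j + ereal (T_ij AT T P i j)
         \<le> U_ij AT AU ini ter d s t P i j)"
proof -
  interpret valid_toll_path AT AU ini ter c d s t P
    using disjoint valid by unfold_locales
  show ?thesis
    using bounds_if_consistent consistent_if_bounds nonneg by blast
qed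

end
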